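(* Let $d\geq1$ be an integer and, for real $n>d/2$ and $u\in[0,+\infty)$, let $$\mathscr A_{nd}(u):=(1+4u)^n\int_{1/4}^{1}ds\,\frac{s^{n-1}}{\sqrt{1-s}\,(1+us)^{2n-d/2}}.$$ Then for all $n>d/2$, $$\sup_{u\in[0,+\infty)}\mathscr A_{nd}(u)\leq A_{nd}:=2^{2n-d/2}\,\frac{(1-\frac{d}{2n})^{n-d/2}}{(1-\frac{d}{4n})^{2n-d/2}}\int_{1/4}^1ds\,\frac{1}{s\sqrt{1-s}\,(4-s)^{n-d/2}}.$$ Moreover, for fixed $d$ and $n\to+\infty$, $$A_{nd}=\sqrt\pi\,\frac{3^{d/2+1/2}}{2^{d/2}\sqrt n}\Big(\frac43\Big)^n\Big[1+O(\tfrac1n)\Big].$$ *)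

theory Defs
  imports "HOL-Analysis.Analysis" "HOL-Library.Landau_Symbols"
begin

definition scrA :: "real \<Rightarrow> nat \<Rightarrow> real \<Rightarrow> real" where
  "scrA n d u = (1 + 4*u) powr n *
     integral {1/4 .. 1::real} (\<lambda>t. t powr (n - 1) /
        (sqrt (1 - t) * (1 + u*t) powr (2*n - real d / 2)))"

definition bigA :: "real \<Rightarrow> nat \<Rightarrow> real" where
  "bigA n d = 2 powr (2*n - real d / 2) *
     ((1 - real d / (2*n)) powr (n - real d / 2) /
      (1 - real d / (4*n)) powr (2*n - real d / 2)) *
     integral {1/4 .. 1::real} (\<lambda>s. 1 / (s * sqrt (1 - s) * (4 - s) powr (n - real d / 2)))"

definition mainA :: "real \<Rightarrow> nat \<Rightarrow> real" where
  "mainA n d = sqrt pi * 3 powr (real d / 2 + 1/2) / (2 powr (real d / 2) * sqrt n)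
     * (4/3) powr n"

end

theory Submission
  imports Defs "HOL-Real_Asymp.Real_Asymp"
begin

(*
  Write k = n - d/2 and m = 2n - d/2 = n + k. Weighted AM-GM with weights n and k, applied to
  t(1 + 4u) and 4 - t, gives (t(1 + 4u)/n)^n ((4 - t)/k)^k <= (4(1 + ut)/m)^m. The two numbers add
  up to 4(1 + ut), so the factor (1 + ut)^m cancels and the integrand of scrA is dominated pointwise,
  uniformly in u, by the integrand of A_nd together with its prefactor.

  The substitution s = 1 - 3x turns the integral in A_nd into 3^(1/2 - k) times the integral over
  [0, 1/4] of x^(-1/2) (1 + x)^(-k) / (1 - 3x). Up to errors 4 x^(1/2) e^(-kx) from below and
  12 x^(1/2) e^(-kx) + 4k x^(3/2) e^(-3kx/4) from above, this kernel is x^(-1/2) e^(-kx); all these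
  functions have Gamma values as integrals over [0, oo), so the integral is sqrt(pi/k) (1 + O(1/k)).
  The remaining elementary prefactor is expanded by real_asymp.
*)

lemma powr_weighted_am_gm:
  fixes a b p q :: real
  assumes "a > 0" "b > 0" "p > 0" "q > 0"
  shows "(a/p) powr p * (b/q) powr q \<le> ((a + b)/(p + q)) powr (p + q)"
proof -
  have pq: "p + q > 0"
    using assms by simp
  have "(a/p) powr (p/(p+q)) * (b/q) powr (q/(p+q)) \<le> p/(p+q) * (a/p) + q/(p+q) * (b/q)"
    using assms pq by (intro Youngs_inequality_0) (auto simp: add_divide_distrib[symmetric])
  also have "\<dots> = (a + b)/(p + q)"
    using assms pq by (simp add: add_divide_distrib)
  finally have "((a/p) powr (p/(p+q)) * (b/q) powr (q/(p+q))) powr (p+q) \<le> ((a + b)/(p + q)) powr (p + q)"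
    using assms by (intro powr_mono2) auto
  then show ?thesis
    using assms pq by (simp add: powr_mult powr_powr)
qed

lemma borel_measurable_imp_lebesgue_on:
  fixes f :: "'a::euclidean_space \<Rightarrow> 'b::euclidean_space"
  shows "f \<in> borel_measurable borel \<Longrightarrow> f \<in> borel_measurable (lebesgue_on S)"
  using measurable_compose[OF id_borel_measurable_lebesgue_on] by (simp only: id_def)

lemma integrable_on_between:
  fixes f g h :: "'a::euclidean_space \<Rightarrow> real"
  assumes g: "g integrable_on S" and h: "h integrable_on S" and S: "S \<in> sets lebesgue"
    and f: "f \<in> borel_measurable (lebesgue_on S)"
    and "\<And>x. x \<in> S \<Longrightarrow> g x \<le> f x" "\<And>x. x \<in> S \<Longrightarrow> f x \<le> h x"
  shows "f integrable_on S"
proof -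
  have "(\<lambda>x. f x - g x) integrable_on S"
  proof (rule measurable_bounded_by_integrable_imp_integrable_real)
    show "(\<lambda>x. f x - g x) \<in> borel_measurable (lebesgue_on S)"
      using f integrable_imp_measurable[OF g] by (rule borel_measurable_diff)
    show "(\<lambda>x. h x - g x) integrable_on S"
      using h g by (rule integrable_diff)
  qed (use assms in auto)
  from integrable_add[OF this g] show ?thesis
    by simp
qed

lemma has_integral_powr_exp:
  fixes a c :: real
  assumes a: "a > -1" and c: "c > 0"
  shows "((\<lambda>x. x powr a * exp (-(c*x))) has_integral Gamma (a+1) * c powr (-(a+1))) {0..}"
proof -
  let ?f = "\<lambda>t::real. t powr a / exp t"
  have Gamma: "(?f has_integral Gamma (a+1)) {0..}"
    using Gamma_integral_real[of "a+1"] a by simp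
  have "?f absolutely_integrable_on {0..}"
    by (rule nonnegative_absolutely_integrable) (use Gamma in auto)
  moreover have "(\<lambda>x. c*x) ` {0..} = {0::real..}"
    using c by (auto simp: image_iff intro!: bexI[where x = "_ / c"])
  ultimately have "(\<lambda>x. \<bar>c\<bar> * ?f (c*x)) absolutely_integrable_on {0..} \<and>
      integral {0..} (\<lambda>x. \<bar>c\<bar> * ?f (c*x)) = Gamma (a+1)"
    using c Gamma
    by (intro has_absolute_integral_change_of_variables_1'[where g = "\<lambda>x. c*x", THEN iffD2])
       (auto intro!: derivative_eq_intros inj_onI simp: integral_unique)
  then have "((\<lambda>x. c * ?f (c*x)) has_integral Gamma (a+1)) {0..}"
    using c by (auto simp: has_integral_iff absolutely_integrable_on_def)
  from has_integral_mult_right[OF this, of "c powr (-(a+1))"]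
  have "((\<lambda>x. c powr (-(a+1)) * (c * ?f (c*x))) has_integral c powr (-(a+1)) * Gamma (a+1)) {0..}" .
  moreover have "c powr (-(a+1)) * (c * ?f (c*x)) = x powr a * exp (-(c*x))" if "x \<in> {0..}" for x
  proof -
    have "c powr (-(a+1)) * c * c powr a = 1"
      using c by (simp add: mult.commute powr_minus_divide powr_mult_base)
    then show ?thesis
      using c that by (simp add: powr_mult exp_minus field_simps)
  qed
  ultimately have "((\<lambda>x. x powr a * exp (-(c*x))) has_integral c powr (-(a+1)) * Gamma (a+1)) {0..}"
    by (rule has_integral_eq[rotated])
  then show ?thesis
    by (simp only: mult.commute)
qed

definition bigA_kernel :: "real \<Rightarrow> real \<Rightarrow> real" where
  "bigA_kernel k x = x powr (-1/2) * (1 + x) powr (-k) / (1 - 3*x)"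

lemma bigA_kernel_subst:
  assumes "s \<le> 1"
  shows "bigA_kernel k ((1 - s)/3) = 3 powr (1/2 + k) / (s * sqrt (1 - s) * (4 - s) powr k)"
proof (cases "s = 1")
  case False
  then have "1 - s > 0" using assms by simp
  then have "((1 - s)/3) powr (-1/2) = 3 powr (1/2) / sqrt (1 - s)"
    by (simp add: powr_divide powr_minus_divide powr_half_sqrt)
  moreover have "(1 + (1 - s)/3) powr (-k) = 3 powr k / (4 - s) powr k"
  proof -
    have "1 + (1 - s)/3 = (4 - s)/3" by simp
    then show ?thesis
      using assms by (simp only:) (simp add: powr_minus_divide powr_divide)
  qed
  moreover have "1 - 3*((1 - s)/3) = s" by (simp add: field_simps)
  ultimately show ?thesis
    unfolding bigA_kernel_def by (simp only:) (simp add: powr_add)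
qed (simp add: bigA_kernel_def)

lemma bigA_kernel_ge:
  assumes "k \<ge> 0" "0 \<le> x" "x \<le> 1/4"
  shows "x powr (-1/2) * exp (-(k*x)) \<le> bigA_kernel k x"
proof -
  have "exp (-(k*x)) \<le> exp (-k * ln (1 + x))"
    using assms ln_add_one_self_le_self[of x] by (simp add: mult_left_mono)
  also have "\<dots> = (1 + x) powr (-k)"
    using assms by (simp add: powr_def)
  also have "\<dots> \<le> (1 + x) powr (-k) / (1 - 3*x)"
    using assms by (simp add: le_divide_eq mult_left_le)
  finally have "x powr (-1/2) * exp (-(k*x)) \<le> x powr (-1/2) * ((1 + x) powr (-k) / (1 - 3*x))"
    by (rule mult_left_mono) simp
  then show ?thesis
    by (simp add: bigA_kernel_def)
qed

lemma bigA_kernel_le: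
  assumes k: "k \<ge> 0" and x: "0 \<le> x" "x \<le> 1/4"
  shows "bigA_kernel k x \<le> x powr (-1/2) * exp (-(k*x)) + 12 * (x powr (1/2) * exp (-(k*x)))
          + 4*k * (x powr (3/2) * exp (-(3*k/4 * x)))"
proof -
  have xx: "x * x \<le> x * (1/4)"
    using x by (intro mult_left_mono) auto
  have "k*(x - x\<^sup>2) \<le> k*ln (1 + x)"
    using k x ln_one_plus_pos_lower_bound[of x] by (intro mult_left_mono) auto
  then have "(1 + x) powr (-k) \<le> exp (-(k*x)) * exp (k*x\<^sup>2)"
    using x by (simp add: powr_def algebra_simps flip: exp_add)
  also have "\<dots> \<le> exp (-(k*x)) * (1 + k*x\<^sup>2 * exp (k*x\<^sup>2))"
    using mult_right_mono[OF exp_ge_add_one_self[of "-(k*x\<^sup>2)"], of "exp (k*x\<^sup>2)"]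
    by (simp add: exp_minus field_simps)
  also have "\<dots> = exp (-(k*x)) + k*x\<^sup>2 * exp (-(k*x) + k*x\<^sup>2)"
    by (simp only: exp_add) (simp add: algebra_simps)
  also have "\<dots> \<le> exp (-(k*x)) + k*x\<^sup>2 * exp (-(3*k/4 * x))"
  proof -
    have "x\<^sup>2 \<le> x/4"
      using xx
      by (simp add: power2_eq_square)
    then have "k*x\<^sup>2 \<le> k*x/4"
      using mult_left_mono k by fastforce
    then show ?thesis
      using k by (intro add_left_mono mult_left_mono) auto
  qed
  finally have A: "(1 + x) powr (-k) \<le> exp (-(k*x)) + k*x\<^sup>2 * exp (-(3*k/4 * x))" .
  have B: "1 / (1 - 3*x) \<le> 1 + 12*x"
    using x xx by (simp add: field_simps)
  have "bigA_kernel k x = x powr (-1/2) * (1 + x) powr (-k) * (1 / (1 - 3*x))"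
    by (simp add: bigA_kernel_def)
  also have "\<dots> \<le> x powr (-1/2) * (exp (-(k*x)) + k*x\<^sup>2 * exp (-(3*k/4 * x))) * (1 + 12*x)"
    using A B x k by (intro mult_mono mult_left_mono) auto
  also have "\<dots> = x powr (-1/2) * exp (-(k*x)) + 12 * ((x * x powr (-1/2)) * exp (-(k*x)))
          + k * (1 + 12*x) * ((x\<^sup>2 * x powr (-1/2)) * exp (-(3*k/4 * x)))"
    by (simp add: algebra_simps)
  also have "x * x powr (-1/2) = x powr (1/2)"
    using x powr_add[of x 1 "-1/2"] by simp
  also have "x\<^sup>2 * x powr (-1/2) = x powr (3/2)"
    using x powr_add[of x 2 "-1/2"] by (simp add: powr_numeral)
  also have "k * (1 + 12*x) * (x powr (3/2) * exp (-(3*k/4 * x))) \<le> 4*k * (x powr (3/2) * exp (-(3*k/4 * x)))"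
    using k x mult_left_mono[of "1 + 12*x" 4 k] by (intro mult_right_mono) (auto simp: mult.commute)
  finally show ?thesis by simp
qed

(* The correction 4 x^(1/2) e^(-kx) makes the lower function change sign exactly at x = 1/4,
   where the kernel is cut off. *)
lemma bigA_kernel_extension_bounds:
  assumes k: "k > 0" and x: "x \<ge> 0"
  shows "x powr (-1/2) * exp (-(k*x)) - 4 * (x powr (1/2) * exp (-(k*x)))
           \<le> (if x \<in> {0..1/4} then bigA_kernel k x else 0) \<and>
         (if x \<in> {0..1/4} then bigA_kernel k x else 0)
           \<le> x powr (-1/2) * exp (-(k*x)) + 12 * (x powr (1/2) * exp (-(k*x)))
              + 4*k * (x powr (3/2) * exp (-(3*k/4 * x)))"
proof (cases "x \<le> 1/4")
  case True
  have "x powr (-1/2) * exp (-(k*x)) - 4 * (x powr (1/2) * exp (-(k*x)))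
      \<le> x powr (-1/2) * exp (-(k*x))"
    by simp
  also have "\<dots> \<le> bigA_kernel k x"
    using True k x by (intro bigA_kernel_ge) auto
  finally show ?thesis
    using True k x bigA_kernel_le[of k x] by simp
next
  case False
  have "x powr (1/2) = x * x powr (-1/2)"
    using False powr_add[of x 1 "-1/2"] by simp
  then have "x powr (-1/2) \<le> 4 * x powr (1/2)"
    using False by (simp add: mult_right_mono)
  then have "x powr (-1/2) * exp (-(k*x)) - 4 * (x powr (1/2) * exp (-(k*x))) \<le> 0"
    by (simp add: mult_right_mono)
  moreover have "0 \<le> x powr (-1/2) * exp (-(k*x)) + 12 * (x powr (1/2) * exp (-(k*x)))
      + 4*k * (x powr (3/2) * exp (-(3*k/4 * x)))"
    using k by (intro add_nonneg_nonneg mult_nonneg_nonneg) auto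
  ultimately show ?thesis
    using False by simp
qed

lemma bigA_kernel_integral_bounds:
  assumes k: "k > 0"
  shows "bigA_kernel k integrable_on {0..1/4}"
    and "Gamma (1/2) * k powr (-1/2) - 4 * (Gamma (3/2) * k powr (-3/2))
           \<le> integral {0..1/4} (bigA_kernel k)"
    and "integral {0..1/4} (bigA_kernel k)
           \<le> Gamma (1/2) * k powr (-1/2) + 12 * (Gamma (3/2) * k powr (-3/2))
              + 4*k * (Gamma (5/2) * (3*k/4) powr (-5/2))"
proof -
  define G where "G x = (if x \<in> {0..1/4} then bigA_kernel k x else 0)" for x :: real
  define L where "L x = x powr (-1/2) * exp (-(k*x)) - 4 * (x powr (1/2) * exp (-(k*x)))" for x :: real
  define U where "U x = x powr (-1/2) * exp (-(k*x)) + 12 * (x powr (1/2) * exp (-(k*x)))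
    + 4*k * (x powr (3/2) * exp (-(3*k/4 * x)))" for x :: real
  have g1: "((\<lambda>x. x powr (-1/2) * exp (-(k*x))) has_integral Gamma (1/2) * k powr (-1/2)) {0..}"
    using has_integral_powr_exp[of "-1/2" k] k by simp
  have g3: "((\<lambda>x. x powr (1/2) * exp (-(k*x))) has_integral Gamma (3/2) * k powr (-3/2)) {0..}"
    using has_integral_powr_exp[of "1/2" k] k by simp
  have g5: "((\<lambda>x. x powr (3/2) * exp (-(3*k/4 * x))) has_integral Gamma (5/2) * (3*k/4) powr (-5/2)) {0..}"
    using has_integral_powr_exp[of "3/2" "3*k/4"] k by simp
  have L_int: "(L has_integral Gamma (1/2) * k powr (-1/2) - 4 * (Gamma (3/2) * k powr (-3/2))) {0..}"
    unfolding L_def by (intro has_integral_diff has_integral_mult_right g1 g3)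
  have U_int: "(U has_integral Gamma (1/2) * k powr (-1/2) + 12 * (Gamma (3/2) * k powr (-3/2))
      + 4*k * (Gamma (5/2) * (3*k/4) powr (-5/2))) {0..}"
    unfolding U_def by (intro has_integral_add has_integral_mult_right g1 g3 g5)
  have between: "L x \<le> G x" "G x \<le> U x" if "x \<in> {0..}" for x
    using bigA_kernel_extension_bounds[OF k, of x] that unfolding G_def L_def U_def by auto
  have "G \<in> borel_measurable (lebesgue_on {0..})"
    unfolding G_def bigA_kernel_def by (intro borel_measurable_imp_lebesgue_on) measurable
  then have "G integrable_on {0..}"
  proof (rule integrable_on_between[rotated 3])
    show "L integrable_on {0..}" "U integrable_on {0..}"
      using L_int U_int by blast+
  qed (use between in auto)
  then obtain I where G_int: "(G has_integral I) {0..}"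
    by blast
  then have kernel_int: "(bigA_kernel k has_integral I) {0..1/4}"
    using has_integral_restrict[of "{0..1/4}" "{0..}" "bigA_kernel k" I] by (simp add: G_def[abs_def])
  then show "bigA_kernel k integrable_on {0..1/4}"
    by blast
  show "Gamma (1/2) * k powr (-1/2) - 4 * (Gamma (3/2) * k powr (-3/2))
      \<le> integral {0..1/4} (bigA_kernel k)"
    using has_integral_le[OF L_int G_int] between integral_unique[OF kernel_int] by auto
  show "integral {0..1/4} (bigA_kernel k)
      \<le> Gamma (1/2) * k powr (-1/2) + 12 * (Gamma (3/2) * k powr (-3/2))
         + 4*k * (Gamma (5/2) * (3*k/4) powr (-5/2))"
    using has_integral_le[OF G_int U_int] between integral_unique[OF kernel_int] by auto
qed

lemma has_integral_bigA_integrand: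
  assumes "bigA_kernel k integrable_on {0..1/4}"
  shows "((\<lambda>s. 1 / (s * sqrt (1 - s) * (4 - s) powr k)) has_integral
           3 powr (1/2 - k) * integral {0..1/4} (bigA_kernel k)) {1/4..1}"
proof -
  let ?I = "integral {0..1/4} (bigA_kernel k)"
  have "(bigA_kernel k has_integral ?I) (cbox 0 (1/4))"
    using assms by (simp add: integrable_integral)
  from has_integral_affinity[OF this, of "-1/3" "1/3"]
  have "((\<lambda>s. bigA_kernel k (-1/3 * s + 1/3)) has_integral 3 * ?I) {1/4..1}"
    using image_affinity_atLeastAtMost[of "-3" "1::real" 0 "1/4"] by simp
  from has_integral_mult_right[OF this, of "3 powr (-(1/2 + k))"]
  have scaled: "((\<lambda>s. 3 powr (-(1/2 + k)) * bigA_kernel k (-1/3 * s + 1/3)) has_integral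
      3 powr (-(1/2 + k)) * (3 * ?I)) {1/4..1}" .
  have const: "3 powr (-(1/2 + k)) * (3 * ?I) = 3 powr (1/2 - k) * ?I"
    using powr_add[of 3 1 "-(1/2 + k)"] by simp
  have pointwise: "3 powr (-(1/2 + k)) * bigA_kernel k (-1/3 * s + 1/3) = 1 / (s * sqrt (1 - s) * (4 - s) powr k)"
    if "s \<in> {1/4..1}" for s
  proof -
    have "-1/3 * s + 1/3 = (1 - s)/3"
      by simp
    then show ?thesis
      using that by (simp add: bigA_kernel_subst powr_minus field_simps)
  qed
  from has_integral_eq[OF pointwise scaled] show ?thesis
    unfolding const .
qed

lemma scrA_integrand_le:
  fixes n k m u t :: real
  assumes n: "n > 0" and k: "k > 0" and m: "m = n + k" and u: "u \<ge> 0" and t: "0 < t" "t \<le> 1"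
  shows "(1 + 4*u) powr n * (t powr (n - 1) / (sqrt (1 - t) * (1 + u*t) powr m))
    \<le> 2 powr m * ((k/n) powr k / (m/(2*n)) powr m) * (1 / (t * sqrt (1 - t) * (4 - t) powr k))"
proof -
  have ut: "1 + u*t > 0"
    using u t by (simp add: add_pos_nonneg)
  have "(t*(1 + 4*u)/n) powr n * ((4 - t)/k) powr k \<le> ((t*(1 + 4*u) + (4 - t))/m) powr m"
    unfolding m using assms by (intro powr_weighted_am_gm) auto
  also have "t*(1 + 4*u) + (4 - t) = 4 * (1 + u*t)"
    by (simp add: algebra_simps)
  finally have "(t*(1 + 4*u)/n) powr n * ((4 - t)/k) powr k \<le> (4*(1 + u*t)/m) powr m" .
  moreover have "(4*(1 + u*t)) powr m = 4 powr m * (1 + u*t) powr m"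
    using ut by (intro powr_mult)
  ultimately have "t powr n * (1 + 4*u) powr n / n powr n * ((4 - t) powr k / k powr k)
      \<le> 4 powr m * (1 + u*t) powr m / m powr m"
    using assms ut by (simp add: powr_divide powr_mult)
  then have "(1 + 4*u) powr n * t powr n / (1 + u*t) powr m
      \<le> 4 powr m * n powr n * k powr k / m powr m / (4 - t) powr k"
    using assms ut by (simp add: field_simps)
  also have "4 powr m * n powr n * k powr k / m powr m = 2 powr m * ((k/n) powr k / (m/(2*n)) powr m)"
  proof -
    have "4 powr m = 2 powr m * 2 powr m"
      by (simp flip: powr_mult)
    moreover have "n powr m = n powr n * n powr k"
      using m by (simp add: powr_add)
    ultimately show ?thesis
      using n k m by (simp add: powr_divide powr_mult field_simps)
  qed
  finally have "(1 + 4*u) powr n * t powr n / (1 + u*t) powr m / (t * sqrt (1 - t))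
      \<le> 2 powr m * ((k/n) powr k / (m/(2*n)) powr m) / (4 - t) powr k / (t * sqrt (1 - t))"
    using t by (intro divide_right_mono) auto
  moreover have "t powr (n - 1) = t powr n / t"
    using t by (simp add: powr_diff)
  ultimately show ?thesis
    by (simp add: field_simps)
qed

lemma scrA_le_bigA:
  fixes n u :: real and d :: nat
  assumes n: "n > real d / 2" and u: "u \<ge> 0"
  shows "scrA n d u \<le> bigA n d"
proof -
  define k where "k = n - real d / 2"
  define m where "m = 2*n - real d / 2"
  define C where "C = 2 powr m * ((1 - real d / (2*n)) powr k / (1 - real d / (4*n)) powr m)"
  define f where "f t = 1 / (t * sqrt (1 - t) * (4 - t) powr k)" for t :: real
  define h where "h t = (1 + 4*u) powr n * (t powr (n - 1) / (sqrt (1 - t) * (1 + u*t) powr m))"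
    for t :: real
  have k: "k > 0" and n0: "n > 0"
    using n by (auto simp: k_def intro: le_less_trans[of 0 "real d / 2"])
  have C_eq: "C = 2 powr m * ((k/n) powr k / (m/(2*n)) powr m)"
    using n0 by (simp add: C_def k_def m_def field_simps)
  have "f integrable_on {1/4..1}"
    using has_integral_bigA_integrand[OF bigA_kernel_integral_bounds(1)[OF k]]
    unfolding f_def by blast
  then have Cf: "(\<lambda>t. C * f t) integrable_on {1/4..1}"
    by (rule integrable_on_mult_right)
  have h_nonneg: "0 \<le> h t" if "t \<in> {1/4..1}" for t
    using that u unfolding h_def by (intro mult_nonneg_nonneg divide_nonneg_nonneg) auto
  have h_le: "h t \<le> C * f t" if "t \<in> {1/4..1}" for t
    using that scrA_integrand_le[OF n0 k _ u, of m t]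
    unfolding h_def f_def C_eq by (simp add: k_def m_def)
  have "h \<in> borel_measurable (lebesgue_on {1/4..1})"
    unfolding h_def by (intro borel_measurable_imp_lebesgue_on) measurable
  then have "h integrable_on {1/4..1}"
    by (rule integrable_on_between[OF integrable_0 Cf, rotated]) (use h_nonneg h_le in auto)
  then have "integral {1/4..1} h \<le> integral {1/4..1} (\<lambda>t. C * f t)"
    using Cf h_le by (rule integral_le)
  moreover have "scrA n d u = integral {1/4..1} h"
    unfolding scrA_def h_def m_def by (rule integral_mult_right[symmetric])
  moreover have "bigA n d = integral {1/4..1} (\<lambda>t. C * f t)"
    unfolding bigA_def C_def f_def k_def m_def by (rule integral_mult_right[symmetric])
  ultimately show ?thesis
    by simp
qed

lemma bigA_kernel_integral_asymp:
  "(\<lambda>k. integral {0..1/4} (bigA_kernel k) - sqrt pi / sqrt k) \<in> O(\<lambda>k. k powr (-3/2))"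
proof
  define c where "c = 16 * Gamma (3/2::real) + 4 * Gamma (5/2::real) * (3/4) powr (-5/2)"
  show "\<forall>\<^sub>F k in at_top. norm (integral {0..1/4} (bigA_kernel k) - sqrt pi / sqrt k)
      \<le> c * norm (k powr (-3/2))"
    using eventually_gt_at_top[of 0]
  proof eventually_elim
    case (elim k)
    define A where "A = Gamma (3/2) * k powr (-3/2)"
    define B where "B = Gamma (5/2) * (3/4) powr (-5/2) * k powr (-3/2)"
    have main: "Gamma (1/2) * k powr (-1/2) = sqrt pi / sqrt k"
      using elim by (simp add: Gamma_one_half_real powr_minus_divide powr_half_sqrt)
    have "4*k * (Gamma (5/2) * (3*k/4) powr (-5/2)) = 4 * B"
      unfolding B_def using elim powr_add[of k 1 "-5/2"] powr_mult[of "3/4" k "-5/2"] by simp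
    then have "sqrt pi / sqrt k - 4 * A \<le> integral {0..1/4} (bigA_kernel k)"
      and "integral {0..1/4} (bigA_kernel k) \<le> sqrt pi / sqrt k + 12 * A + 4 * B"
      using bigA_kernel_integral_bounds(2,3)[OF elim] main unfolding A_def by simp_all
    moreover have "A \<ge> 0" "B \<ge> 0"
      unfolding A_def B_def by (simp_all add: Gamma_real_pos less_imp_le)
    moreover have "c * norm (k powr (-3/2)) = 16 * A + 4 * B"
      unfolding c_def A_def B_def by (simp add: algebra_simps)
    ultimately show ?case
      by (simp only: real_norm_def abs_le_iff) linarith
  qed
qed

lemma bigA_eq_mainA:
  fixes d :: nat
  assumes n: "n > real d / 2"
  shows "bigA n d = mainA n d * (sqrt n / sqrt pi)
    * ((1 - real d / (2*n)) powr (n - real d / 2) / (1 - real d / (4*n)) powr (2*n - real d / 2))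
    * integral {0..1/4} (bigA_kernel (n - real d / 2))"
proof -
  define D where "D = real d / 2"
  have k: "n - D > 0" and n0: "n > 0"
    using n by (auto simp: D_def intro: le_less_trans[of 0 "real d / 2"])
  have integral_eq: "integral {1/4..1} (\<lambda>s. 1 / (s * sqrt (1 - s) * (4 - s) powr (n - D)))
      = 3 powr (1/2 - (n - D)) * integral {0..1/4} (bigA_kernel (n - D))"
    using has_integral_bigA_integrand[OF bigA_kernel_integral_bounds(1)[OF k]] by (rule integral_unique)
  have "(4/3) powr n = 2 powr (2*n) / 3 powr n"
    using powr_powr[of 2 2 n] by (simp add: powr_divide)
  moreover have "2 powr (2*n - D) = 2 powr (2*n) / 2 powr D"
    by (rule powr_diff)
  moreover have "3 powr (1/2 - (n - D)) = 3 powr (D + 1/2) / 3 powr n"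
    by (simp add: powr_diff[symmetric] algebra_simps)
  ultimately have "2 powr (2*n - D) * 3 powr (1/2 - (n - D)) = mainA n d * (sqrt n / sqrt pi)"
    using n0 by (simp add: mainA_def D_def)
  moreover have "bigA n d = 2 powr (2*n - D) * 3 powr (1/2 - (n - D))
    * ((1 - real d / (2*n)) powr (n - D) / (1 - real d / (4*n)) powr (2*n - D))
    * integral {0..1/4} (bigA_kernel (n - D))"
    unfolding bigA_def D_def[symmetric] integral_eq by (simp only: ac_simps)
  ultimately show ?thesis
    unfolding D_def by simp
qed

lemma bigA_asymptotics:
  fixes d :: nat
  shows "\<exists>r :: real \<Rightarrow> real. r \<in> O[at_top](\<lambda>n. 1 / n) \<and>
           (\<forall>\<^sub>F n in at_top. bigA n d = mainA n d * (1 + r n))"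
proof -
  define P where "P n = (1 - real d / (2*n)) powr (n - real d / 2) / (1 - real d / (4*n)) powr (2*n - real d / 2)"
    for n :: real
  define E where "E k = integral {0..1/4} (bigA_kernel k) - sqrt pi / sqrt k" for k :: real
  define r where "r n = (P n * sqrt n / sqrt (n - real d / 2) - 1) + P n * sqrt n / sqrt pi * E (n - real d / 2)"
    for n :: real
  have main_term: "(\<lambda>n. P n * sqrt n / sqrt (n - real d / 2) - 1) \<in> O(\<lambda>n. 1 / n)"
    unfolding P_def by real_asymp
  have shift: "filterlim (\<lambda>n. n - real d / 2) at_top at_top"
    by real_asymp
  have "(\<lambda>n. P n * sqrt n / sqrt pi * E (n - real d / 2))
      \<in> O(\<lambda>n. P n * sqrt n / sqrt pi * (n - real d / 2) powr (-3/2))"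
    using landau_o.big.compose[OF bigA_kernel_integral_asymp[folded E_def] shift]
    by (rule landau_o.big.mult_left)
  also have "(\<lambda>n. P n * sqrt n / sqrt pi * (n - real d / 2) powr (-3/2)) \<in> O(\<lambda>n. 1 / n)"
    unfolding P_def by real_asymp
  finally have error_term: "(\<lambda>n. P n * sqrt n / sqrt pi * E (n - real d / 2)) \<in> O(\<lambda>n. 1 / n)" .
  from main_term error_term have "r \<in> O(\<lambda>n. 1 / n)"
    unfolding r_def by (rule sum_in_bigo)
  moreover have "\<forall>\<^sub>F n in at_top. bigA n d = mainA n d * (1 + r n)"
    using eventually_gt_at_top[of "real d / 2"]
  proof eventually_elim
    case (elim n)
    then have "n > 0" "n - real d / 2 > 0"
      by (auto intro: le_less_trans[of 0 "real d / 2"])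
    then show ?case
      unfolding bigA_eq_mainA[OF elim] r_def E_def P_def by (simp add: field_simps)
  qed
  ultimately show ?thesis
    by blast
qed

theorem lemma4p4:
  fixes d :: nat
  assumes "d \<ge> 1"
  shows "(\<forall>n::real. n > real d / 2 \<longrightarrow> (\<forall>u::real. u \<ge> 0 \<longrightarrow> scrA n d u \<le> bigA n d))
    \<and> (\<exists>r :: real \<Rightarrow> real. r \<in> O[at_top](\<lambda>n. 1 / n) \<and>
          (\<forall>\<^sub>F n in at_top. bigA n d = mainA n d * (1 + r n)))"
  using scrA_le_bigA bigA_asymptotics by blast

end
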